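(* Fix $\mathcal{D}_n$ and $\hat\theta$. Let $r\in\{1,\dots,n-1\}$. Define $h_i^{mVc}=|y_i^p-\hat y^s(x_i,\hat\theta)|\,(g_i^Tg_i)^{1/2}$, $i=1,\dots,n$, let $h^{mVc}_{(1)}\le\dots\le h^{mVc}_{(n)}$ be their order statistics, set $h^{mVc}_{(n+1)}=\infty$, and assume $h^{mVc}_{(n-r)}>0$. Let $k=\min\{s:0\le s\le r,\ (r-s)h^{mVc}_{(n-s)}<\sum_{i=1}^{n-s}h^{mVc}_{(i)}\}$ and $M=\frac{1}{r-k}\sum_{i=1}^{n-k}h^{mVc}_{(i)}$. Then the probabilities $$\pi_i^{mVc}=r\frac{h_i^{mVc}\wedge M}{\sum_{j=1}^n(h_j^{mVc}\wedge M)},\quad i=1,\dots,n,$$ minimize $\mathrm{tr}(\tilde V)$ over all $(\pi_1,\dots,\pi_n)$ with $\sum_{i=1}^n\pi_i=r$ and $0<\pi_i\le1$ (i.e. Poisson subsampling with these probabilities is mVc-optimal).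
   Context: Physical data $\mathcal{D}_n=\{(x_i,y_i^p)\}_{i=1}^n$ with $x_i\in\Omega\subset\mathbb{R}^d$; $\hat y^s(x,\theta)$ is a surrogate of a computer model, differentiable in $\theta\in\Theta\subset\mathbb{R}^q$; $\hat\theta=\arg\min_{\theta\in\Theta}\frac1n\sum_{i=1}^n[y_i^p-\hat y^s(x_i,\theta)]^2$. $g_i=\nabla_\theta\hat y^s(x_i,\hat\theta)$ (column vector). For subsampling probabilities $\pi_i$, $\tilde V=\frac{4}{n^2}\sum_{i=1}^n\frac{1-\pi_i}{\pi_i}[y_i^p-\hat y^s(x_i,\hat\theta)]^2g_ig_i^T$. $a\wedge b=\min(a,b)$. *)

theory Defs
  imports "HOL-Analysis.Analysis"
begin

definition ordstat :: "nat \<Rightarrow> (nat \<Rightarrow> real) \<Rightarrow> nat \<Rightarrow> ereal" where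
  "ordstat n h j = (if 1 \<le> j \<and> j \<le> n then ereal (sort (map h [1..<n+1]) ! (j - 1)) else \<infinity>)"

definition ordsum :: "nat \<Rightarrow> (nat \<Rightarrow> real) \<Rightarrow> nat \<Rightarrow> real" where
  "ordsum n h m = (\<Sum>i=1..m. sort (map h [1..<n+1]) ! (i - 1))"

definition kidx :: "nat \<Rightarrow> nat \<Rightarrow> (nat \<Rightarrow> real) \<Rightarrow> nat" where
  "kidx n r h = (LEAST s. s \<le> r \<and>
      ereal (real (r - s)) * ordstat n h (n - s) < ereal (ordsum n h (n - s)))"

definition Mthr :: "nat \<Rightarrow> nat \<Rightarrow> (nat \<Rightarrow> real) \<Rightarrow> real" where
  "Mthr n r h = ordsum n h (n - kidx n r h) / real (r - kidx n r h)"

definition pi_mVc :: "nat \<Rightarrow> nat \<Rightarrow> (nat \<Rightarrow> real) \<Rightarrow> nat \<Rightarrow> real" where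
  "pi_mVc n r h i = real r * min (h i) (Mthr n r h) / (\<Sum>j=1..n. min (h j) (Mthr n r h))"

definition outer :: "real^'q \<Rightarrow> real^'q^'q" where
  "outer v = (\<chi> a b. v $ a * v $ b)"

definition Vtilde :: "nat \<Rightarrow> (nat \<Rightarrow> real) \<Rightarrow> (nat \<Rightarrow> real) \<Rightarrow> (nat \<Rightarrow> real^'q) \<Rightarrow> real^'q^'q" where
  "Vtilde n p res g = (4 / (real n)^2) *\<^sub>R
     (\<Sum>i=1..n. ((1 - p i) / p i * (res i)^2) *\<^sub>R outer (g i))"

end

theory Submission imports Defs begin

text \<open>With \<open>c_i = h_i\<^sup>2\<close>, the trace is \<open>\<Sum> c_i (1 - \<pi>_i)/\<pi>_i\<close> up to a positive factor. This convex
  function of \<open>\<pi>\<close> lies above its supporting hyperplane at \<open>q_i = min h_i M / M\<close>: its partial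
  derivative there is \<open>-M\<^sup>2\<close> where \<open>h_i < M\<close>, and \<open>-h_i\<^sup>2 \<le> -M\<^sup>2\<close> where \<open>q_i = 1\<close>, where moreover
  \<open>\<pi>_i - q_i \<le> 0\<close>. Hence on the box \<open>0 < \<pi>_i \<le> 1\<close> the objective is at least its value at \<open>q\<close>
  minus \<open>M\<^sup>2 \<Sum>(\<pi>_i - q_i)\<close>, and this vanishes once \<open>\<Sum>\<pi>_i = \<Sum>q_i = r\<close>. The choice of \<open>k\<close>
  places \<open>M\<close> between the order statistics \<open>h_(n-k)\<close> and \<open>h_(n-k+1)\<close>, which is exactly what
  makes \<open>\<Sum> min h_i M = r M\<close>.\<close>

text \<open>\<open>sorted_vals n h ! j\<close> is the order statistic \<open>h_(j+1)\<close>.\<close>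

definition sorted_vals :: "nat \<Rightarrow> (nat \<Rightarrow> real) \<Rightarrow> real list" where
  "sorted_vals n h = sort (map h [1..<n+1])"

lemma length_sorted_vals [simp]: "length (sorted_vals n h) = n"
  by (simp add: sorted_vals_def)

lemma sorted_sorted_vals: "sorted (sorted_vals n h)"
  by (simp add: sorted_vals_def)

lemma sum_sorted_vals: "(\<Sum>i<n. f (sorted_vals n h ! i)) = (\<Sum>j=1..n. f (h j) :: real)"
proof -
  have "(\<Sum>i<n. f (sorted_vals n h ! i)) = sum_list (map f (sorted_vals n h))"
    by (simp add: sum_list_sum_nth lessThan_atLeast0)
  also have "\<dots> = sum_list (map f (map h [1..<n+1]))"
    unfolding sorted_vals_def by (metis mset_map mset_sort sum_mset_sum_list)
  also have "\<dots> = (\<Sum>j=1..n. f (h j))"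
    by (simp only: map_map comp_def interv_sum_list_conv_sum_set_nat set_upt
        Suc_eq_plus1[symmetric] atLeastLessThanSuc_atLeastAtMost)
  finally show ?thesis .
qed

lemma sorted_vals_nonneg: "(\<And>j. 0 \<le> h j) \<Longrightarrow> i < n \<Longrightarrow> 0 \<le> sorted_vals n h ! i"
  using nth_mem[of i "sorted_vals n h"] by (auto simp: sorted_vals_def)

lemma ordsum_sorted_vals: "ordsum n h m = (\<Sum>i<m. sorted_vals n h ! i)"
proof -
  have "(\<Sum>i=1..m. f (i - 1)) = (\<Sum>i<m. f i)" for f :: "nat \<Rightarrow> real"
    by (induction m) (auto simp: atLeastLessThanSuc_atLeastAtMost[symmetric] sum.atLeastLessThan_Suc)
  then show ?thesis by (simp add: ordsum_def sorted_vals_def)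
qed

lemma ordstat_sorted_vals: "1 \<le> j \<Longrightarrow> j \<le> n \<Longrightarrow> ordstat n h j = ereal (sorted_vals n h ! (j - 1))"
  by (simp add: ordstat_def sorted_vals_def)

lemma sum_min_sorted_split:
  fixes xs :: "real list"
  assumes sorted: "sorted xs" and m: "m \<le> length xs"
    and below: "0 < m \<Longrightarrow> xs ! (m - 1) < M"
    and above: "m < length xs \<Longrightarrow> M \<le> xs ! m"
  shows "(\<Sum>i<length xs. min (xs ! i) M) = (\<Sum>i<m. xs ! i) + real (length xs - m) * M"
proof -
  have "{..<length xs} = {..<m} \<union> {m..<length xs}" using m by auto
  then have "(\<Sum>i<length xs. min (xs ! i) M)
      = (\<Sum>i<m. min (xs ! i) M) + (\<Sum>i\<in>{m..<length xs}. min (xs ! i) M)"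
    by (metis finite_atLeastLessThan finite_lessThan ivl_disj_int_one(2) sum.union_disjoint)
  also have "(\<Sum>i<m. min (xs ! i) M) = (\<Sum>i<m. xs ! i)"
  proof (rule sum.cong)
    fix i assume "i \<in> {..<m}"
    then have "xs ! i \<le> xs ! (m - 1)" using m by (intro sorted_nth_mono[OF sorted]) auto
    then show "min (xs ! i) M = xs ! i" using below \<open>i \<in> {..<m}\<close> by simp
  qed simp
  also have "(\<Sum>i\<in>{m..<length xs}. min (xs ! i) M) = (\<Sum>i\<in>{m..<length xs}. M)"
  proof (rule sum.cong)
    fix i assume "i \<in> {m..<length xs}"
    then have "xs ! m \<le> xs ! i" by (intro sorted_nth_mono[OF sorted]) auto
    then show "min (xs ! i) M = M" using above \<open>i \<in> {m..<length xs}\<close> by simp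
  qed simp
  finally show ?thesis by simp
qed

context
  fixes n r :: nat and h :: "nat \<Rightarrow> real"
  assumes h_nonneg: "\<And>i. 0 \<le> h i" and r_pos: "1 \<le> r" and r_le: "r \<le> n - 1"
    and ordstat_pos: "ordstat n h (n - r) > 0"
begin

private lemma kidx_cond_iff:
  assumes "s \<le> r"
  shows "(s \<le> r \<and> ereal (real (r - s)) * ordstat n h (n - s) < ereal (ordsum n h (n - s)))
     \<longleftrightarrow> real (r - s) * sorted_vals n h ! (n - s - 1) < ordsum n h (n - s)"
  using assms r_pos r_le by (simp add: ordstat_sorted_vals)

private lemma ordsum_pos: "0 < ordsum n h (n - r)"
proof -
  have "n - r = Suc (n - r - 1)" using r_pos r_le by simp
  then have "ordsum n h (n - r) = ordsum n h (n - r - 1) + sorted_vals n h ! (n - r - 1)"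
    unfolding ordsum_sorted_vals by (metis sum.lessThan_Suc)
  moreover have "0 \<le> ordsum n h (n - r - 1)"
    unfolding ordsum_sorted_vals using sorted_vals_nonneg[OF h_nonneg] by (intro sum_nonneg) auto
  moreover have "0 < sorted_vals n h ! (n - r - 1)"
    using ordstat_pos ordstat_sorted_vals[of "n - r" n h] r_pos r_le by simp
  ultimately show ?thesis by simp
qed

private lemma kidx_cond:
  "kidx n r h \<le> r \<and>
   real (r - kidx n r h) * sorted_vals n h ! (n - kidx n r h - 1) < ordsum n h (n - kidx n r h)"
proof -
  have "r \<le> r \<and> ereal (real (r - r)) * ordstat n h (n - r) < ereal (ordsum n h (n - r))"
    using kidx_cond_iff[of r] ordsum_pos by simp
  then have "kidx n r h \<le> r \<and> ereal (real (r - kidx n r h)) * ordstat n h (n - kidx n r h)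
                                  < ereal (ordsum n h (n - kidx n r h))"
    unfolding kidx_def by (rule LeastI)
  then show ?thesis using kidx_cond_iff by blast
qed

private lemma kidx_minimal:
  assumes "0 < kidx n r h"
  shows "ordsum n h (n - kidx n r h) \<le> real (r - kidx n r h) * sorted_vals n h ! (n - kidx n r h)"
proof -
  define k where "k = kidx n r h"
  have "k \<le> r" using kidx_cond k_def by simp
  have "k - 1 < k" using assms by (simp add: k_def)
  then have "\<not> (k - 1 \<le> r \<and> ereal (real (r - (k - 1))) * ordstat n h (n - (k - 1))
                           < ereal (ordsum n h (n - (k - 1))))"
    unfolding k_def kidx_def by (rule not_less_Least)
  then have "\<not> real (r - (k - 1)) * sorted_vals n h ! (n - (k - 1) - 1) < ordsum n h (n - (k - 1))"
    using kidx_cond_iff[of "k - 1"] \<open>k \<le> r\<close> by simp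
  moreover have "n - (k - 1) - 1 = n - k" "n - (k - 1) = Suc (n - k)" "r - (k - 1) = Suc (r - k)"
    using assms \<open>k \<le> r\<close> r_le unfolding k_def by auto
  ultimately have "ordsum n h (n - k) + sorted_vals n h ! (n - k)
                     \<le> real (Suc (r - k)) * sorted_vals n h ! (n - k)"
    by (simp add: ordsum_sorted_vals)
  then show ?thesis unfolding k_def by (simp add: algebra_simps)
qed

private lemma kidx_less: "kidx n r h < r"
proof (rule ccontr)
  assume "\<not> kidx n r h < r"
  then have "kidx n r h = r" using kidx_cond by simp
  then show False using kidx_minimal r_pos ordsum_pos by simp
qed

lemma Mthr_pos_and_sum_min:
  "0 < Mthr n r h \<and> (\<Sum>j=1..n. min (h j) (Mthr n r h)) = real r * Mthr n r h"
proof -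
  define k where "k = kidx n r h"
  define M where "M = Mthr n r h"
  have k: "k < r" "real (r - k) * sorted_vals n h ! (n - k - 1) < ordsum n h (n - k)"
    using kidx_less kidx_cond unfolding k_def by auto
  have rk: "0 < real (r - k)" using k by simp
  have M_eq: "M = ordsum n h (n - k) / real (r - k)"
    unfolding M_def Mthr_def k_def ..
  have below: "sorted_vals n h ! (n - k - 1) < M" using k rk by (simp add: M_eq field_simps)
  have "0 \<le> sorted_vals n h ! (n - k - 1)" using sorted_vals_nonneg[OF h_nonneg] k r_le by simp
  then have M_pos: "0 < M" using below by simp
  have above: "M \<le> sorted_vals n h ! (n - k)" if "n - k < n"
    using kidx_minimal that rk unfolding k_def[symmetric] by (simp add: M_eq field_simps)
  have "(\<Sum>j=1..n. min (h j) M) = (\<Sum>i<n. min (sorted_vals n h ! i) M)"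
    by (rule sum_sorted_vals[symmetric])
  also have "\<dots> = ordsum n h (n - k) + real k * M"
    using sum_min_sorted_split[OF sorted_sorted_vals, where m = "n - k" and M = M] below above k r_le
    by (simp add: ordsum_sorted_vals Suc_leI)
  also have "\<dots> = real r * M"
    using k rk by (simp add: M_eq field_simps)
  finally show ?thesis using M_pos unfolding M_def by simp
qed

end

text \<open>For \<open>h = 0\<close> also \<open>q = 0\<close>, and the left-hand cost term is \<open>0\<close> through \<open>x / 0 = 0\<close>.\<close>

lemma inverse_cost_above_supporting_line:
  fixes h M p :: real
  assumes h: "0 \<le> h" and M: "0 < M" and p: "0 < p" "p \<le> 1"
  defines "q \<equiv> min h M / M"
  shows "(1 - q) / q * h\<^sup>2 - M\<^sup>2 * (p - q) \<le> (1 - p) / p * h\<^sup>2"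
proof (cases "h < M")
  case True
  have "2 * M * h * p \<le> h\<^sup>2 + M\<^sup>2 * p\<^sup>2"
    using sum_squares_bound[of h "M * p"] by (simp add: power_mult_distrib algebra_simps)
  then have "2 * M * h \<le> h\<^sup>2 / p + M\<^sup>2 * p"
    using p by (simp add: field_simps power2_eq_square)
  moreover have "(1 - q) / q * h\<^sup>2 = (if h = 0 then 0 else M * h - h\<^sup>2)"
    using True M h by (simp add: q_def field_simps power2_eq_square)
  moreover have "(1 - p) / p * h\<^sup>2 = h\<^sup>2 / p - h\<^sup>2"
    using p by (simp add: field_simps)
  moreover have "M\<^sup>2 * (p - q) = M\<^sup>2 * p - M * h"
    using True M by (simp add: q_def field_simps power2_eq_square)
  ultimately show ?thesis using p by (auto simp: zero_le_mult_iff)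
next
  case False
  then have q: "q = 1" using M by (simp add: q_def)
  have "M\<^sup>2 * (1 - p) \<le> h\<^sup>2 * (1 - p)"
    using False M p by (intro mult_right_mono power_mono) auto
  also have "\<dots> \<le> h\<^sup>2 * (1 - p) / p"
    using p by (simp add: le_divide_eq mult_left_le)
  finally show ?thesis by (simp add: q algebra_simps)
qed

lemma truncated_probabilities_optimal:
  fixes h p :: "nat \<Rightarrow> real" and M :: real and A :: "nat set"
  assumes h: "\<And>i. 0 \<le> h i" and M: "0 < M"
    and p: "\<forall>i\<in>A. 0 < p i \<and> p i \<le> 1"
    and same_total: "(\<Sum>i\<in>A. p i) = (\<Sum>i\<in>A. min (h i) M / M)"
  shows "(\<Sum>i\<in>A. (1 - min (h i) M / M) / (min (h i) M / M) * (h i)\<^sup>2)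
           \<le> (\<Sum>i\<in>A. (1 - p i) / p i * (h i)\<^sup>2)"
proof -
  define q where "q i = min (h i) M / M" for i
  have "(\<Sum>i\<in>A. (1 - q i) / q i * (h i)\<^sup>2)
      = (\<Sum>i\<in>A. (1 - q i) / q i * (h i)\<^sup>2 - M\<^sup>2 * (p i - q i))"
    using same_total by (simp add: q_def sum_subtractf sum_distrib_left[symmetric])
  also have "\<dots> \<le> (\<Sum>i\<in>A. (1 - p i) / p i * (h i)\<^sup>2)"
    unfolding q_def using p h M by (intro sum_mono inverse_cost_above_supporting_line) auto
  finally show ?thesis by (simp only: q_def)
qed

lemma trace_Vtilde:
  "trace (Vtilde n p res g) = 4 / (real n)\<^sup>2 * (\<Sum>i=1..n. (1 - p i) / p i * (res i)\<^sup>2 * (g i \<bullet> g i))"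
proof -
  have "trace (Vtilde n p res g)
      = 4 / (real n)\<^sup>2 * (\<Sum>a\<in>UNIV. \<Sum>i=1..n. (1 - p i) / p i * (res i)\<^sup>2 * (g i $ a * g i $ a))"
    by (simp add: Vtilde_def trace_def outer_def sum_distrib_left)
  also have "\<dots> = 4 / (real n)\<^sup>2 * (\<Sum>i=1..n. (1 - p i) / p i * (res i)\<^sup>2 * (\<Sum>a\<in>UNIV. g i $ a * g i $ a))"
    by (subst sum.swap) (simp add: sum_distrib_left)
  finally show ?thesis by (simp add: inner_vec_def)
qed

theorem theorem3:
  fixes n r :: nat
    and x :: "nat \<Rightarrow> real^'d"
    and yp :: "nat \<Rightarrow> real"
    and ys :: "real^'d \<Rightarrow> real^'q \<Rightarrow> real"
    and \<Theta> :: "(real^'q) set"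
    and \<theta>hat :: "real^'q"
    and g :: "nat \<Rightarrow> real^'q"
    and \<Omega> :: "(real^'d) set"
  assumes x_in: "\<forall>i\<in>{1..n}. x i \<in> \<Omega>"
    and diff: "\<forall>i\<in>{1..n}. \<forall>\<theta>\<in>\<Theta>. ys (x i) differentiable (at \<theta>)"
    and theta_in: "\<theta>hat \<in> \<Theta>"
    and theta_min: "\<forall>\<theta>\<in>\<Theta>. (1 / real n) * (\<Sum>i=1..n. (yp i - ys (x i) \<theta>hat)^2)
                        \<le> (1 / real n) * (\<Sum>i=1..n. (yp i - ys (x i) \<theta>)^2)"
    and grad: "\<forall>i\<in>{1..n}. (ys (x i) has_derivative (\<lambda>v. g i \<bullet> v)) (at \<theta>hat)"
    and r_range: "1 \<le> r" "r \<le> n - 1"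
    and pos: "ordstat n (\<lambda>i. \<bar>yp i - ys (x i) \<theta>hat\<bar> * sqrt (g i \<bullet> g i)) (n - r) > 0"
  shows "let h = (\<lambda>i. \<bar>yp i - ys (x i) \<theta>hat\<bar> * sqrt (g i \<bullet> g i));
             res = (\<lambda>i. yp i - ys (x i) \<theta>hat);
             p\<^sub>o = pi_mVc n r h
         in (\<Sum>i=1..n. p\<^sub>o i) = real r
          \<and> (\<forall>i\<in>{1..n}. 0 \<le> p\<^sub>o i \<and> p\<^sub>o i \<le> 1 \<and> (h i > 0 \<longrightarrow> p\<^sub>o i > 0))
          \<and> (\<forall>p :: nat \<Rightarrow> real. (\<Sum>i=1..n. p i) = real r \<and> (\<forall>i\<in>{1..n}. 0 < p i \<and> p i \<le> 1)
               \<longrightarrow> trace (Vtilde n p\<^sub>o res g) \<le> trace (Vtilde n p res g))"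
proof -
  define h where "h = (\<lambda>i. \<bar>yp i - ys (x i) \<theta>hat\<bar> * sqrt (g i \<bullet> g i))"
  define res where "res = (\<lambda>i. yp i - ys (x i) \<theta>hat)"
  define M where "M = Mthr n r h"
  have h_nonneg: "\<And>i. 0 \<le> h i" by (simp add: h_def)
  have M_pos: "0 < M" and sum_min: "(\<Sum>j=1..n. min (h j) M) = real r * M"
    using Mthr_pos_and_sum_min[OF h_nonneg r_range pos[folded h_def]] by (auto simp: M_def)
  have pi_eq: "pi_mVc n r h = (\<lambda>i. min (h i) M / M)"
    unfolding pi_mVc_def M_def[symmetric] sum_min using r_range M_pos by simp
  have sum_pi: "(\<Sum>i=1..n. min (h i) M / M) = real r"
    using sum_min M_pos by (simp add: sum_divide_distrib[symmetric])
  have trace_eq: "trace (Vtilde n p res g) = 4 / (real n)\<^sup>2 * (\<Sum>i=1..n. (1 - p i) / p i * (h i)\<^sup>2)"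
    for p by (simp add: trace_Vtilde h_def res_def power_mult_distrib mult.assoc)
  have optimal: "trace (Vtilde n (\<lambda>i. min (h i) M / M) res g) \<le> trace (Vtilde n p res g)"
    if "(\<Sum>i=1..n. p i) = real r" "\<forall>i\<in>{1..n}. 0 < p i \<and> p i \<le> 1" for p
    unfolding trace_eq using truncated_probabilities_optimal[OF h_nonneg M_pos] that sum_pi
    by (intro mult_left_mono) simp_all
  show ?thesis
    unfolding Let_def h_def[symmetric] res_def[symmetric] pi_eq
    using sum_pi M_pos h_nonneg optimal by auto
qed

end
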